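(* Let $q\in\mathbb N$ (so $q>0$), $0<\sigma<1$, and $K,w_{\min},w_{\max}>0$. Let $(t_i)_{i\in\mathbb Z}$ be a nondecreasing sequence of real knots with $t_i\to\pm\infty$ as $i\to\pm\infty$, with set of distinct nodes $\{\hat z_j:j\in\mathbb Z\}$, $\hat z_{j-1}<\hat z_j$, and let $(w_i)_{i\in\mathbb Z}$ be weights with $w_{\min}\le\inf_{i} w_i\le\sup_i w_i\le w_{\max}$. Suppose the local mesh-ratio is bounded by $K$, i.e. $$\sup_{j\in\mathbb Z}\max\Big(\frac{\hat z_j-\hat z_{j-1}}{\hat z_{j-1}-\hat z_{j-2}},\frac{\hat z_j-\hat z_{j-1}}{\hat z_{j+1}-\hat z_j}\Big)\le K.$$ Then there exists a constant $C_{\rm scale}>0$, depending only on $q,w_{\min},w_{\max}$ and $K$, such that for all $i\in\mathbb Z$ with $|\mathrm{supp}(\hat R_{i,q})|>0$, $$|\mathrm{supp}(\hat R_{i,q})|^{1-2\sigma}\le C_{\rm scale}\,|\hat R_{i,q}|^2_{H^\sigma(\mathrm{supp}(\hat R_{i,q}))}.$$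
   Context: B-splines of degree $r\in\mathbb N_0$ are defined recursively by $\hat B_{i,0}=\chi_{[t_{i-1},t_i)}$ and $\hat B_{i,r}=\beta_{i-1,r}\hat B_{i,r-1}+(1-\beta_{i,r})\hat B_{i+1,r-1}$, where $\beta_{i,r}(t)=(t-t_i)/(t_{i+r}-t_i)$ if $t_i\ne t_{i+r}$ and $\beta_{i,r}=0$ otherwise. The NURBS are $\hat R_{i,q}=w_i\hat B_{i,q}/\sum_{k\in\mathbb Z}w_k\hat B_{k,q}$. For an interval $I$ and $\hat v\in L^2(I)$, the Sobolev–Slobodeckij seminorm is $|\hat v|_{H^\sigma(I)}^2=\int_I\int_I|\hat v(r)-\hat v(s)|^2|r-s|^{-1-2\sigma}\,ds\,dr$. $|\cdot|$ of a set denotes its Lebesgue measure. *)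

theory Defs
  imports "HOL-Analysis.Analysis"
begin

definition bs_beta :: "(int \<Rightarrow> real) \<Rightarrow> int \<Rightarrow> nat \<Rightarrow> real \<Rightarrow> real" where
  "bs_beta t i r x = (if t i \<noteq> t (i + int r) then (x - t i) / (t (i + int r) - t i) else 0)"

fun bspline :: "(int \<Rightarrow> real) \<Rightarrow> int \<Rightarrow> nat \<Rightarrow> real \<Rightarrow> real" where
  "bspline t i 0 x = indicator {t (i - 1)..<t i} x"
| "bspline t i (Suc r) x =
     bs_beta t (i - 1) (Suc r) x * bspline t i r x
     + (1 - bs_beta t i (Suc r) x) * bspline t (i + 1) r x"

definition nurbs :: "(int \<Rightarrow> real) \<Rightarrow> (int \<Rightarrow> real) \<Rightarrow> int \<Rightarrow> nat \<Rightarrow> real \<Rightarrow> real" where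
  "nurbs t w i q x = w i * bspline t i q x / infsum (\<lambda>k. w k * bspline t k q x) UNIV"

definition supp :: "(real \<Rightarrow> real) \<Rightarrow> real set" where
  "supp f = closure {x. f x \<noteq> 0}"

text \<open>Squared Sobolev--Slobodeckij seminorm on I (possibly infinite, hence ennreal).\<close>
definition slobodeckij_sq :: "real \<Rightarrow> real set \<Rightarrow> (real \<Rightarrow> real) \<Rightarrow> ennreal" where
  "slobodeckij_sq \<sigma> I v =
     (\<integral>\<^sup>+ r\<in>I. (\<integral>\<^sup>+ s\<in>I. ennreal (\<bar>v r - v s\<bar>\<^sup>2 * \<bar>r - s\<bar> powr (-1 - 2 * \<sigma>)) \<partial>lborel) \<partial>lborel)"

end

theory Submission
  imports Defs
begin

(*
  Let h = t(i+q) - t(i-1), so that supp R(i,q) lies in [t(i-1), t(i+q)]. For bounded weights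
  R(i,q) is comparable to B(i,q). On the middle third of a longest knot interval (which has
  length at least h/(q+1)) the B-spline is bounded below by a constant. Near one end of its
  support it vanishes linearly, so it stays below half of that constant on an interval whose
  length is a fixed fraction of h: at the right end if all knots but the last coincide, and
  otherwise at the left end, whose first knot gap is comparable to h because the mesh ratio lets
  node gaps grow by at most a factor K per node. Integrating the Slobodeckij kernel over the
  product of these two intervals bounds the seminorm below by a multiple of h^(1 - 2 sigma),
  while c h <= |supp R(i,q)| <= h.
*)

section \<open>B-splines\<close>

lemma bs_beta_bounds:
  assumes "t i \<le> x" "x \<le> t (i + int r)"
  shows "0 \<le> bs_beta t i r x \<and> bs_beta t i r x \<le> 1"
  using assms by (auto simp: bs_beta_def divide_simps)

lemma bspline_nonzero_imp_knot_bounds: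
  assumes "mono t" "bspline t i r x \<noteq> 0"
  shows "t (i - 1) \<le> x \<and> x < t (i + int r)"
  using assms(2)
proof (induction r arbitrary: i)
  case 0
  then show ?case by (auto simp: indicator_def split: if_splits)
next
  case (Suc r)
  have "t (i - 1) \<le> t i" "t (i + int r) \<le> t (i + int (Suc r))"
    using assms(1) by (auto simp: mono_def)
  moreover from Suc.prems have "bspline t i r x \<noteq> 0 \<or> bspline t (i + 1) r x \<noteq> 0" by auto
  ultimately show ?case
    using Suc.IH[of i] Suc.IH[of "i + 1"] by (auto simp: algebra_simps)
qed

lemma bspline_left_coeff_bounds:
  assumes "mono t" "bspline t i r x \<noteq> 0"
  shows "0 \<le> bs_beta t (i - 1) (Suc r) x \<and> bs_beta t (i - 1) (Suc r) x \<le> 1"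
  using bs_beta_bounds[of t "i - 1" x "Suc r"] bspline_nonzero_imp_knot_bounds[OF assms] by simp

lemma bspline_right_coeff_bounds:
  assumes "mono t" "bspline t (i + 1) r x \<noteq> 0"
  shows "0 \<le> 1 - bs_beta t i (Suc r) x \<and> 1 - bs_beta t i (Suc r) x \<le> 1"
  using bs_beta_bounds[of t i x "Suc r"] bspline_nonzero_imp_knot_bounds[OF assms]
  by (simp add: add.assoc)

lemma bspline_nonneg:
  assumes "mono t"
  shows "0 \<le> bspline t i r x"
proof (induction r arbitrary: i)
  case 0
  then show ?case by simp
next
  case (Suc r)
  have "0 \<le> bs_beta t (i - 1) (Suc r) x * bspline t i r x"
    using bspline_left_coeff_bounds[OF assms, of i r x] Suc.IH[of i] by (cases "bspline t i r x = 0") auto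
  moreover have "0 \<le> (1 - bs_beta t i (Suc r) x) * bspline t (i + 1) r x"
    using bspline_right_coeff_bounds[OF assms, of i r x] Suc.IH[of "i + 1"]
    by (cases "bspline t (i + 1) r x = 0") auto
  ultimately show ?case by simp
qed

lemma bspline_nonzero_imp_index:
  assumes "mono t" "bspline t k r x \<noteq> 0" "t (j - 1) \<le> x" "x < t j"
  shows "k \<in> {j - int r..j}"
proof -
  from bspline_nonzero_imp_knot_bounds[OF assms(1,2)] have "t (k - 1) \<le> x" "x < t (k + int r)" by auto
  with assms(3,4) have "t (k - 1) < t j" "t (j - 1) < t (k + int r)" by auto
  then have "k - 1 < j" "j - 1 < k + int r"
    using assms(1) by (metis mono_def not_le)+
  then show ?thesis by auto
qed

lemma bspline_sum_eq_1:
  assumes "mono t" "t (j - 1) \<le> x" "x < t j"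
  shows "(\<Sum>k\<in>{j - int r..j}. bspline t k r x) = 1"
proof (induction r)
  case 0
  then show ?case using assms by simp
next
  case (Suc r)
  define f where "f k = bs_beta t (k - 1) (Suc r) x * bspline t k r x" for k
  define g where "g k = (1 - bs_beta t (k - 1) (Suc r) x) * bspline t k r x" for k
  have vanish: "bspline t k r x = 0" if "k \<notin> {j - int r..j}" for k
    using bspline_nonzero_imp_index[OF assms(1) _ assms(2,3)] that by blast
  have "(\<Sum>k\<in>{j - int (Suc r)..j}. bspline t k (Suc r) x)
      = (\<Sum>k\<in>{j - int (Suc r)..j}. f k) + (\<Sum>k\<in>{j - int (Suc r)..j}. g (k + 1))"
    by (simp add: f_def g_def sum.distrib)
  also have "(\<Sum>k\<in>{j - int (Suc r)..j}. f k) = (\<Sum>k\<in>{j - int r..j}. f k)"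
    by (rule sum.mono_neutral_right) (auto simp: f_def vanish)
  also have "(\<Sum>k\<in>{j - int (Suc r)..j}. g (k + 1)) = (\<Sum>k\<in>{j - int r..j + 1}. g k)"
    by (rule sum.reindex_bij_witness[of _ "\<lambda>k. k - 1" "\<lambda>k. k + 1"]) auto
  also have "\<dots> = (\<Sum>k\<in>{j - int r..j}. g k)"
    by (rule sum.mono_neutral_right) (auto simp: g_def vanish)
  also have "(\<Sum>k\<in>{j - int r..j}. f k) + (\<Sum>k\<in>{j - int r..j}. g k)
      = (\<Sum>k\<in>{j - int r..j}. bspline t k r x)"
    by (simp add: f_def g_def sum.distrib[symmetric] algebra_simps)
  finally show ?case using Suc.IH by simp
qed

lemma knot_interval_between:
  fixes t :: "int \<Rightarrow> 'a::linorder"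
  assumes "mono t" "t k \<le> x" "x < t (k + int n)"
  shows "\<exists>m. k < m \<and> m \<le> k + int n \<and> t (m - 1) \<le> x \<and> x < t m"
  using assms(3)
proof (induction n)
  case 0
  then show ?case using assms(2) by simp
next
  case (Suc n)
  show ?case
  proof (cases "x < t (k + int n)")
    case True
    then show ?thesis using Suc.IH by force
  next
    case False
    then have "t (k + int n) \<le> x" by simp
    then show ?thesis using Suc.prems by (intro exI[of _ "k + int n + 1"]) (auto simp: add_ac)
  qed
qed

lemma exists_knot_interval:
  fixes t :: "int \<Rightarrow> real"
  assumes "mono t" "filterlim t at_top at_top" "filterlim t at_bot at_bot"
  shows "\<exists>j. t (j - 1) \<le> x \<and> x < t j"
proof -
  obtain N where N: "x < t N"
    using assms(2) by (auto simp: filterlim_at_top_dense eventually_at_top_linorder)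
  obtain M0 where "\<forall>n\<le>M0. t n \<le> x"
    using assms(3) by (auto simp: filterlim_at_bot eventually_at_bot_linorder)
  then have M: "min M0 N \<le> N" "t (min M0 N) \<le> x" by auto
  then have "x < t (min M0 N + int (nat (N - min M0 N)))" using N by simp
  from knot_interval_between[OF assms(1) M(2) this] show ?thesis by blast
qed

lemma bspline_le_1:
  assumes "mono t"
  shows "bspline t k r x \<le> 1"
proof (cases "bspline t k r x = 0")
  case False
  with bspline_nonzero_imp_knot_bounds[OF assms] have "t (k - 1) \<le> x" "x < t (k - 1 + int (Suc r))"
    by (auto simp: algebra_simps)
  then obtain j where j: "t (j - 1) \<le> x" "x < t j"
    using knot_interval_between[OF assms] by blast
  have "bspline t k r x \<le> (\<Sum>k\<in>{j - int r..j}. bspline t k r x)"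
    using bspline_nonzero_imp_index[OF assms False j]
    by (intro member_le_sum) (auto simp: bspline_nonneg[OF assms])
  then show ?thesis using bspline_sum_eq_1[OF assms j] by simp
qed simp

section \<open>Lower bounds and the plateau\<close>

lemma bspline_lower_bound:
  fixes t :: "int \<Rightarrow> real"
  assumes "mono t" "0 < d"
  shows "i \<le> m \<Longrightarrow> m \<le> i + int r \<Longrightarrow> t (m - 1) + d \<le> x \<Longrightarrow> x + d \<le> t m \<Longrightarrow>
    t (i + int r) - t (i - 1) \<le> H \<Longrightarrow> (d / H) ^ r \<le> bspline t i r x"
proof (induction r arbitrary: i)
  case 0
  then show ?case using assms(2) by (simp add: indicator_def)
next
  case (Suc r)
  have mono_t: "a \<le> b \<Longrightarrow> t a \<le> t b" for a b using assms(1) by (simp add: mono_def)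
  have left_nonneg: "0 \<le> bs_beta t (i - 1) (Suc r) x * bspline t i r x"
    and right_nonneg: "0 \<le> (1 - bs_beta t i (Suc r) x) * bspline t (i + 1) r x"
    using bspline_nonneg[OF assms(1)] bspline_left_coeff_bounds[OF assms(1)]
      bspline_right_coeff_bounds[OF assms(1)] by (metis mult_nonneg_nonneg mult_zero_right)+
  have "t (i - 1) \<le> t (m - 1)" "t m \<le> t (i + int (Suc r))" using Suc.prems(1,2) by (auto intro: mono_t)
  then have "0 < H" using Suc.prems assms(2) by linarith
  then have dH: "0 \<le> d / H" using assms(2) by simp
  show ?case
  proof (cases "m \<le> i + int r")
    case True
    have "t (i - 1) \<le> t (m - 1)" "t m \<le> t (i + int r)" "t (i + int r) \<le> t (i + int (Suc r))"
      using Suc.prems(1) True by (auto intro: mono_t)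
    then have den: "0 < t (i + int r) - t (i - 1)" "t (i + int r) - t (i - 1) \<le> H"
      using Suc.prems assms(2) by auto
    have "d / H \<le> (x - t (i - 1)) / (t (i + int r) - t (i - 1))"
      using \<open>t (i - 1) \<le> t (m - 1)\<close> Suc.prems(3) den assms(2) by (intro frac_le) auto
    also have "\<dots> = bs_beta t (i - 1) (Suc r) x" using den by (simp add: bs_beta_def)
    finally have "d / H * (d / H) ^ r \<le> bs_beta t (i - 1) (Suc r) x * bspline t i r x"
      using Suc.IH[of i] Suc.prems True den dH by (intro mult_mono) auto
    then show ?thesis using right_nonneg by simp
  next
    case False
    then have m: "m = i + 1 + int r" using Suc.prems by simp
    have "t (i - 1) \<le> t i" "t i \<le> t (m - 1)" using m by (auto intro: mono_t)
    then have den: "0 < t (i + 1 + int r) - t i" "t (i + 1 + int r) - t i \<le> H"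
      using Suc.prems assms(2) m by (auto simp: algebra_simps)
    have "d / H \<le> (t (i + 1 + int r) - x) / (t (i + 1 + int r) - t i)"
      using Suc.prems(4) m den assms(2) by (intro frac_le) auto
    also have "\<dots> = 1 - bs_beta t i (Suc r) x"
      using den by (simp add: bs_beta_def field_simps)
    finally have "d / H * (d / H) ^ r \<le> (1 - bs_beta t i (Suc r) x) * bspline t (i + 1) r x"
      using Suc.IH[of "i + 1"] Suc.prems m den dH by (intro mult_mono) (auto simp: algebra_simps)
    then show ?thesis using left_nonneg by simp
  qed
qed

lemma bspline_pos:
  fixes t :: "int \<Rightarrow> real"
  assumes "mono t" "i \<le> m" "m \<le> i + int r" "t (m - 1) < x" "x < t m"
  shows "0 < bspline t i r x"
proof -
  define d where "d = min (x - t (m - 1)) (t m - x)"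
  define H where "H = t (i + int r) - t (i - 1)"
  have "0 < d" using assms by (simp add: d_def)
  have "t (i - 1) \<le> t (m - 1)" "t m \<le> t (i + int r)" using assms(1-3) by (auto simp: mono_def)
  then have "0 < H" using assms by (simp add: H_def)
  have "(d / H) ^ r \<le> bspline t i r x"
    using bspline_lower_bound[OF assms(1) \<open>0 < d\<close> assms(2,3)] by (auto simp: d_def H_def)
  moreover have "0 < (d / H) ^ r" using \<open>0 < d\<close> \<open>0 < H\<close> by simp
  ultimately show ?thesis by linarith
qed

lemma exists_knot_gap_ge_average:
  fixes t :: "int \<Rightarrow> real"
  shows "\<exists>m. i \<le> m \<and> m \<le> i + int q \<and> (t (i + int q) - t (i - 1)) / (real q + 1) \<le> t m - t (m - 1)"
proof (rule ccontr)
  assume small: "\<not> ?thesis"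
  define f where "f n = t (i - 1 + int n)" for n
  have "t (i + int q) - t (i - 1) = (\<Sum>n<Suc q. f (Suc n) - f n)"
    by (subst sum_lessThan_telescope) (simp add: f_def algebra_simps)
  also have "\<dots> < (\<Sum>n<Suc q. (t (i + int q) - t (i - 1)) / (real q + 1))"
  proof (rule sum_strict_mono)
    fix n assume "n \<in> {..<Suc q}"
    then show "f (Suc n) - f n < (t (i + int q) - t (i - 1)) / (real q + 1)"
      using small by (auto simp: f_def algebra_simps not_le elim!: allE[of _ "i + int n"])
  qed auto
  also have "\<dots> = t (i + int q) - t (i - 1)" by (simp add: divide_simps)
  finally show False by simp
qed

lemma bspline_plateau:
  fixes t :: "int \<Rightarrow> real"
  assumes "mono t" "t (i - 1) < t (i + int q)"
  shows "\<exists>lo hi. t (i - 1) \<le> lo \<and> hi \<le> t (i + int q) \<and>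
    (t (i + int q) - t (i - 1)) / (3 * (real q + 1)) \<le> hi - lo \<and>
    (\<forall>x\<in>{lo..hi}. (1 / (3 * (real q + 1))) ^ q \<le> bspline t i q x)"
proof -
  define h where "h = t (i + int q) - t (i - 1)"
  have "0 < h" using assms(2) by (simp add: h_def)
  obtain m where m: "i \<le> m" "m \<le> i + int q" "h / (real q + 1) \<le> t m - t (m - 1)"
    using exists_knot_gap_ge_average[of i q t] by (auto simp: h_def)
  define d where "d = (t m - t (m - 1)) / 3"
  have d: "h / (3 * (real q + 1)) \<le> d"
    using divide_right_mono[OF m(3), of 3] by (simp add: d_def mult.commute)
  moreover have "0 < h / (3 * (real q + 1))" using \<open>0 < h\<close> by simp
  ultimately have "0 < d" by linarith
  have "t (i - 1) \<le> t (m - 1)" "t m \<le> t (i + int q)" using assms(1) m by (auto simp: mono_def)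
  show ?thesis
  proof (intro exI conjI ballI)
    show "t (i - 1) \<le> t (m - 1) + d" "t m - d \<le> t (i + int q)"
      using \<open>t (i - 1) \<le> t (m - 1)\<close> \<open>t m \<le> t (i + int q)\<close> \<open>0 < d\<close> by auto
    have "t m - d - (t (m - 1) + d) = d" by (simp add: d_def field_simps)
    then show "(t (i + int q) - t (i - 1)) / (3 * (real q + 1)) \<le> t m - d - (t (m - 1) + d)"
      using d by (simp add: h_def)
    fix x assume "x \<in> {t (m - 1) + d..t m - d}"
    then have "(d / h) ^ q \<le> bspline t i q x"
      using bspline_lower_bound[OF assms(1) \<open>0 < d\<close> m(1,2)] by (auto simp: h_def)
    moreover have "1 / (3 * (real q + 1)) \<le> d / h"
      using d \<open>0 < h\<close> by (simp add: divide_simps mult.commute)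
    then have "(1 / (3 * (real q + 1))) ^ q \<le> (d / h) ^ q" by (intro power_mono) auto
    ultimately show "(1 / (3 * (real q + 1))) ^ q \<le> bspline t i q x" by linarith
  qed
qed

section \<open>Knot gaps under a bounded mesh ratio\<close>

lemma node_succ_of_knot_jump:
  fixes t z :: "int \<Rightarrow> real"
  assumes "mono t" "strict_mono z" "range z = range t" "t k < t (k + 1)" "t k = z u"
  shows "t (k + 1) = z (u + 1)"
proof -
  obtain v where v: "t (k + 1) = z v" using assms(3) by (metis rangeI image_iff)
  obtain k' where k': "z (u + 1) = t k'" using assms(3) by (metis rangeI image_iff)
  have "u < v" using assms(2,4,5) v by (simp add: strict_mono_less)
  then have "z (u + 1) \<le> z v" using assms(2) by (simp add: strict_mono_less_eq)
  have "t k < t k'" using assms(2,5) k' by (metis lessI strict_mono_less zless_add1_eq)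
  then have "k + 1 \<le> k'" using assms(1) by (metis mono_def not_less zless_imp_add1_zle)
  then have "t (k + 1) \<le> z (u + 1)" using assms(1) k' by (simp add: mono_def)
  then show ?thesis using \<open>z (u + 1) \<le> z v\<close> v by simp
qed

lemma knot_node_index_bound:
  fixes t z :: "int \<Rightarrow> real"
  assumes "mono t" "strict_mono z" "range z = range t" "t k = z u"
  shows "\<exists>v. t (k + int n) = z v \<and> u \<le> v \<and> v \<le> u + int n"
proof (induction n)
  case 0
  then show ?case using assms(4) by auto
next
  case (Suc n)
  then obtain v where v: "t (k + int n) = z v" "u \<le> v" "v \<le> u + int n" by blast
  have "t (k + int n) \<le> t (k + int n + 1)" using assms(1) by (simp add: mono_def)
  then consider "t (k + int n) < t (k + int n + 1)" | "t (k + int n + 1) = t (k + int n)" by linarith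
  then show ?case
  proof cases
    case 1
    with node_succ_of_knot_jump[OF assms(1-3) 1 v(1)] show ?thesis
      using v by (intro exI[of _ "v + 1"]) (auto simp: algebra_simps)
  next
    case 2
    then show ?thesis using v by (intro exI[of _ v]) (auto simp: algebra_simps)
  qed
qed

lemma node_gap_growth:
  fixes z :: "int \<Rightarrow> real"
  assumes "strict_mono z" "0 \<le> K"
    and ratio: "\<forall>j. (z j - z (j - 1)) / (z (j - 1) - z (j - 2)) \<le> K"
  shows "z (u + int n) - z (u + int n - 1) \<le> K ^ n * (z u - z (u - 1))"
proof (induction n)
  case 0
  then show ?case by simp
next
  case (Suc n)
  define j where "j = u + int n + 1"
  have "0 < z (j - 1) - z (j - 2)" using assms(1) by (simp add: strict_mono_less)
  then have "z j - z (j - 1) \<le> K * (z (j - 1) - z (j - 2))"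
    using ratio[rule_format, of j] by (simp add: divide_simps)
  also have "\<dots> \<le> K * (K ^ n * (z u - z (u - 1)))"
    using Suc.IH assms(2) by (intro mult_left_mono) (simp_all add: j_def)
  finally show ?case by (simp add: j_def algebra_simps)
qed

lemma knot_gap_le_earlier_gap:
  fixes t z :: "int \<Rightarrow> real"
  assumes "mono t" "strict_mono z" "range z = range t" "0 \<le> K"
    and ratio: "\<forall>j. (z j - z (j - 1)) / (z (j - 1) - z (j - 2)) \<le> K"
    and "t (k - 1) < t k" "t (m - 1) < t m" "k \<le> m"
  shows "t m - t (m - 1) \<le> max 1 K ^ nat (m - k) * (t k - t (k - 1))"
proof -
  obtain p where p: "t (k - 1) = z p" using assms(3) by (metis rangeI image_iff)
  have k: "t k = z (p + 1)" using node_succ_of_knot_jump[OF assms(1-3), of "k - 1" p] assms(6) p by simp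
  obtain v where v: "t (m - 1) = z v" "p \<le> v" "v \<le> p + (m - k)"
    using knot_node_index_bound[OF assms(1-3) p, of "nat (m - k)"] assms(8) by auto
  have m: "t m = z (v + 1)" using node_succ_of_knot_jump[OF assms(1-3), of "m - 1" v] assms(7) v by simp
  have "t m - t (m - 1) \<le> K ^ nat (v - p) * (t k - t (k - 1))"
    using node_gap_growth[OF assms(2,4) ratio, of "p + 1" "nat (v - p)"] v(2) k m p v(1)
    by (simp add: add.commute)
  also have "\<dots> \<le> max 1 K ^ nat (m - k) * (t k - t (k - 1))"
    using assms(4,6) v(3)
    by (intro mult_right_mono order_trans[OF power_mono power_increasing]) auto
  finally show ?thesis .
qed

lemma first_knot_gap_lower_bound:
  fixes t z :: "int \<Rightarrow> real"
  assumes "mono t" "strict_mono z" "range z = range t" "0 \<le> K"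
    and ratio: "\<forall>j. (z j - z (j - 1)) / (z (j - 1) - z (j - 2)) \<le> K"
    and m0: "i \<le> m0" "m0 \<le> i + int q" "t (m0 - 1) = t (i - 1)" "t (i - 1) < t m0"
  shows "(t (i + int q) - t (i - 1)) / ((real q + 1) * max 1 K ^ q) \<le> t m0 - t (i - 1)"
proof -
  define h where "h = t (i + int q) - t (i - 1)"
  have "t (i - 1) \<le> t m0" "t m0 \<le> t (i + int q)" using assms(1) m0 by (auto simp: mono_def)
  then have "0 < h" using m0(4) by (simp add: h_def)
  obtain m where m: "i \<le> m" "m \<le> i + int q" "h / (real q + 1) \<le> t m - t (m - 1)"
    using exists_knot_gap_ge_average[of i q t] by (auto simp: h_def)
  have "0 < h / (real q + 1)" using \<open>0 < h\<close> by simp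
  then have gap: "t (m - 1) < t m" using m(3) by linarith
  have "m0 \<le> m"
  proof (rule ccontr)
    assume "\<not> m0 \<le> m"
    then have "t m \<le> t (m0 - 1)" "t (i - 1) \<le> t (m - 1)" using assms(1) m(1) by (auto simp: mono_def)
    then show False using gap m0(3) by simp
  qed
  have "t m - t (m - 1) \<le> max 1 K ^ nat (m - m0) * (t m0 - t (m0 - 1))"
    using knot_gap_le_earlier_gap[OF assms(1-4) ratio _ gap \<open>m0 \<le> m\<close>] m0(3,4) by simp
  also have "\<dots> \<le> max 1 K ^ q * (t m0 - t (i - 1))"
    unfolding m0(3) by (intro mult_right_mono power_increasing) (use m0 m in auto)
  finally have "h / (real q + 1) \<le> max 1 K ^ q * (t m0 - t (i - 1))" using m(3) by linarith
  then have "h \<le> (t m0 - t (i - 1)) * ((real q + 1) * max 1 K ^ q)"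
    by (simp add: pos_divide_le_eq mult_ac)
  then show ?thesis by (simp add: h_def pos_divide_le_eq)
qed

section \<open>Linear decay near the ends of the support\<close>

lemma bspline_le_linear_near_left_end:
  fixes t :: "int \<Rightarrow> real"
  assumes "mono t" "0 < g"
  shows "\<forall>k\<in>{i - 1..i + int r}. t k = t (i - 1) \<or> t (i - 1) + g \<le> t k \<Longrightarrow>
    t (i - 1) + g \<le> t (i - 1 + int r) \<Longrightarrow> t (i - 1) \<le> x \<Longrightarrow> x < t (i - 1) + g \<Longrightarrow>
    bspline t i r x \<le> real r * (x - t (i - 1)) / g"
proof (induction r arbitrary: i)
  case 0
  then show ?case using assms(2) by simp
next
  case (Suc r)
  define a where "a = t (i - 1)"
  have a_g: "a + g \<le> t (i + int r)" using Suc.prems(2) by (simp add: a_def)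
  have "bs_beta t (i - 1) (Suc r) x = (x - a) / (t (i + int r) - a)"
    using a_g assms(2) by (simp add: bs_beta_def a_def)
  then have beta: "0 \<le> bs_beta t (i - 1) (Suc r) x" "bs_beta t (i - 1) (Suc r) x \<le> (x - a) / g"
    using a_g assms(2) Suc.prems(3) by (auto simp: a_def intro!: divide_left_mono)
  have left: "bs_beta t (i - 1) (Suc r) x * bspline t i r x \<le> (x - a) / g"
    using beta mult_left_mono[OF bspline_le_1[OF assms(1)] beta(1), of i r x] by simp
  have right: "(1 - bs_beta t i (Suc r) x) * bspline t (i + 1) r x \<le> real r * (x - a) / g"
  proof (cases "bspline t (i + 1) r x = 0")
    case True
    then show ?thesis using Suc.prems(3) assms(2) by (simp add: a_def)
  next
    case False
    have "t i \<le> x" using bspline_nonzero_imp_knot_bounds[OF assms(1) False] by simp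
    moreover have "t i = a \<or> a + g \<le> t i" using Suc.prems(1) by (auto simp: a_def)
    ultimately have "t i = a" using Suc.prems(4) by (auto simp: a_def)
    then have "bspline t (i + 1) r x \<le> real r * (x - a) / g"
      using Suc.IH[of "i + 1"] Suc.prems a_g by (auto simp: a_def algebra_simps)
    moreover have "(1 - bs_beta t i (Suc r) x) * bspline t (i + 1) r x \<le> bspline t (i + 1) r x"
      using bspline_right_coeff_bounds[OF assms(1) False]
      by (intro mult_left_le_one_le bspline_nonneg[OF assms(1)]) auto
    ultimately show ?thesis by linarith
  qed
  have "bspline t i (Suc r) x \<le> (x - a) / g + real r * (x - a) / g" using left right by simp
  also have "\<dots> = real (Suc r) * (x - a) / g" by (simp add: add_divide_distrib[symmetric] ring_distribs)
  finally show ?case by (simp add: a_def)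
qed

lemma bspline_le_linear_near_right_end:
  fixes t :: "int \<Rightarrow> real"
  assumes "mono t" "t (i + int r) = t (i - 1)" "x \<le> t (i + int (Suc r))"
  shows "bspline t i (Suc r) x \<le> (t (i + int (Suc r)) - x) / (t (i + int (Suc r)) - t (i - 1))"
proof -
  define b where "b = t (i + int (Suc r))"
  have "t (i - 1) \<le> t i" "t i \<le> t (i + int r)" "t (i - 1) \<le> b"
    using assms(1) by (auto simp: mono_def b_def)
  then have ti: "t i = t (i - 1)" using assms(2) by simp
  have Bir: "bspline t i r x = 0"
  proof (rule ccontr)
    assume "bspline t i r x \<noteq> 0"
    from bspline_nonzero_imp_knot_bounds[OF assms(1) this] show False using assms(2) by auto
  qed
  then have B: "bspline t i (Suc r) x = (1 - bs_beta t i (Suc r) x) * bspline t (i + 1) r x" by simp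
  show ?thesis
  proof (cases "bspline t (i + 1) r x = 0")
    case True
    then show ?thesis using Bir assms(3) \<open>t (i - 1) \<le> b\<close> by (simp add: b_def)
  next
    case False
    have "t (i + 1 - 1) \<le> x \<and> x < t (i + 1 + int r)"
      by (rule bspline_nonzero_imp_knot_bounds[OF assms(1) False])
    then have "t i \<le> x" "x < b" by (simp_all add: b_def add.assoc)
    have "bspline t i (Suc r) x \<le> 1 - bs_beta t i (Suc r) x"
      unfolding B
      using mult_left_mono[OF bspline_le_1[OF assms(1)], of "1 - bs_beta t i (Suc r) x" "i + 1" r x]
        bspline_right_coeff_bounds[OF assms(1) False] by simp
    also have "1 - bs_beta t i (Suc r) x = (b - x) / (b - t (i - 1))"
      using ti \<open>t i \<le> x\<close> \<open>x < b\<close> by (simp add: bs_beta_def b_def field_simps)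
    finally show ?thesis by (simp only: b_def)
  qed
qed

lemma bspline_dip_at_right_end:
  fixes t :: "int \<Rightarrow> real"
  assumes "mono t" "t (i + int r) = t (i - 1)" "t (i - 1) < t (i + int (Suc r))" "0 < \<epsilon>" "\<epsilon> \<le> 1"
  shows "\<exists>lo hi. t (i - 1) \<le> lo \<and> hi \<le> t (i + int (Suc r)) \<and>
    \<epsilon> * (t (i + int (Suc r)) - t (i - 1)) \<le> hi - lo \<and>
    (\<forall>x\<in>{lo<..<hi}. 0 < bspline t i (Suc r) x \<and> bspline t i (Suc r) x \<le> \<epsilon>)"
proof -
  define a where "a = t (i - 1)"
  define b where "b = t (i + int (Suc r))"
  have "\<epsilon> * (b - a) \<le> b - a" using assms(3,5) by (simp add: a_def b_def mult_left_le_one_le)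
  show ?thesis
  proof (intro exI conjI ballI)
    show "t (i - 1) \<le> b - \<epsilon> * (b - a)" "b \<le> t (i + int (Suc r))"
      using \<open>\<epsilon> * (b - a) \<le> b - a\<close> by (auto simp: a_def b_def)
    show "\<epsilon> * (t (i + int (Suc r)) - t (i - 1)) \<le> b - (b - \<epsilon> * (b - a))" by (simp add: a_def b_def)
    fix x assume x: "x \<in> {b - \<epsilon> * (b - a)<..<b}"
    then have "a < x" using \<open>\<epsilon> * (b - a) \<le> b - a\<close> by auto
    then show "0 < bspline t i (Suc r) x"
      using bspline_pos[OF assms(1), of i "i + int (Suc r)" "Suc r" x] assms(2) x
      by (simp add: a_def b_def)
    have "bspline t i (Suc r) x \<le> (b - x) / (b - a)"
      using bspline_le_linear_near_right_end[OF assms(1,2), of x] x by (simp add: a_def b_def)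
    also have "\<dots> \<le> \<epsilon>" using x assms(3) by (simp add: a_def b_def divide_le_eq)
    finally show "bspline t i (Suc r) x \<le> \<epsilon>" .
  qed
qed

lemma bspline_dip_at_left_end:
  fixes t :: "int \<Rightarrow> real"
  assumes "mono t" "i \<le> m0" "m0 \<le> i - 1 + int q" "t (m0 - 1) = t (i - 1)" "t (i - 1) < t m0"
    and "0 < \<epsilon>" "\<epsilon> \<le> 1"
  shows "\<exists>lo hi. t (i - 1) \<le> lo \<and> hi \<le> t (i + int q) \<and> \<epsilon> * (t m0 - t (i - 1)) \<le> hi - lo \<and>
    (\<forall>x\<in>{lo<..<hi}. 0 < bspline t i q x \<and> bspline t i q x \<le> real q * \<epsilon>)"
proof -
  define a where "a = t (i - 1)"
  define g where "g = t m0 - a"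
  have mono_t: "u \<le> v \<Longrightarrow> t u \<le> t v" for u v using assms(1) by (simp add: mono_def)
  have "0 < g" using assms(5) by (simp add: g_def a_def)
  have "\<epsilon> * g \<le> g" using assms(7) \<open>0 < g\<close> by simp
  have "a + g \<le> t (i - 1 + int q)" using mono_t[OF assms(3)] by (simp add: g_def)
  have two_values: "\<forall>k\<in>{i - 1..i + int q}. t k = a \<or> a + g \<le> t k"
  proof
    fix k assume k: "k \<in> {i - 1..i + int q}"
    show "t k = a \<or> a + g \<le> t k"
    proof (cases "k < m0")
      case True
      then show ?thesis using mono_t[of k "m0 - 1"] mono_t[of "i - 1" k] k assms(4) by (auto simp: a_def)
    next
      case False
      then show ?thesis using mono_t[of m0 k] by (simp add: g_def)
    qed
  qed
  show ?thesis
  proof (intro exI conjI ballI)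
    show "t (i - 1) \<le> a" by (simp add: a_def)
    show "a + \<epsilon> * g \<le> t (i + int q)"
      using \<open>a + g \<le> t (i - 1 + int q)\<close> \<open>\<epsilon> * g \<le> g\<close> mono_t[of "i - 1 + int q" "i + int q"] by simp
    show "\<epsilon> * (t m0 - t (i - 1)) \<le> a + \<epsilon> * g - a" by (simp add: g_def a_def)
    fix x assume x: "x \<in> {a<..<a + \<epsilon> * g}"
    then have "x < t m0" using \<open>\<epsilon> * g \<le> g\<close> by (simp add: g_def)
    then show "0 < bspline t i q x"
      using bspline_pos[OF assms(1,2), of q x] assms(3,4) x by (simp add: a_def)
    have "bspline t i q x \<le> real q * (x - a) / g"
      using bspline_le_linear_near_left_end[OF assms(1) \<open>0 < g\<close> two_values[unfolded a_def]]
        \<open>a + g \<le> t (i - 1 + int q)\<close> x \<open>x < t m0\<close> by (simp add: a_def g_def)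
    also have "\<dots> \<le> real q * \<epsilon>"
      using x \<open>0 < g\<close> by (simp add: pos_divide_le_eq mult_left_mono mult.assoc)
    finally show "bspline t i q x \<le> real q * \<epsilon>" .
  qed
qed

lemma bspline_dip:
  fixes t z :: "int \<Rightarrow> real"
  assumes "mono t" "strict_mono z" "range z = range t" "0 \<le> K"
    and ratio: "\<forall>j. (z j - z (j - 1)) / (z (j - 1) - z (j - 2)) \<le> K"
    and "0 < q" "t (i - 1) < t (i + int q)" "0 < \<epsilon>" "\<epsilon> \<le> 1"
  shows "\<exists>lo hi. t (i - 1) \<le> lo \<and> hi \<le> t (i + int q) \<and>
    \<epsilon> * (t (i + int q) - t (i - 1)) / ((real q + 1) * max 1 K ^ q) \<le> hi - lo \<and>
    (\<forall>x\<in>{lo<..<hi}. 0 < bspline t i q x \<and> bspline t i q x \<le> real q * \<epsilon>)"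
proof -
  define a where "a = t (i - 1)"
  define L where "L = (t (i + int q) - a) / ((real q + 1) * max 1 K ^ q)"
  have "1 \<le> (real q + 1) * max 1 K ^ q"
    using mult_mono[of 1 "real q + 1" 1 "max 1 K ^ q"] one_le_power[of "max 1 K" q] by simp
  then have "L \<le> t (i + int q) - a" using assms(7) by (simp add: L_def a_def divide_le_eq)
  have \<epsilon>L: "\<epsilon> * (t (i + int q) - t (i - 1)) / ((real q + 1) * max 1 K ^ q) = \<epsilon> * L"
    by (simp add: L_def a_def)
  obtain r where r: "q = Suc r" using assms(6) gr0_implies_Suc by blast
  show ?thesis
  proof (cases "t (i + int r) = a")
    case True
    then obtain lo hi where "t (i - 1) \<le> lo" "hi \<le> t (i + int q)" "\<epsilon> * (t (i + int q) - a) \<le> hi - lo"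
      "\<forall>x\<in>{lo<..<hi}. 0 < bspline t i q x \<and> bspline t i q x \<le> \<epsilon>"
      using bspline_dip_at_right_end[OF assms(1) _ _ assms(8,9), of i r] assms(7) r by (auto simp: a_def)
    moreover have "\<epsilon> * L \<le> \<epsilon> * (t (i + int q) - a)" using \<open>L \<le> t (i + int q) - a\<close> assms(8) by simp
    moreover have "\<epsilon> \<le> real q * \<epsilon>" using assms(6,8) by simp
    ultimately show ?thesis unfolding \<epsilon>L by (meson order_trans)
  next
    case False
    then have "a < t (i - 1 + int q)" using assms(1) r by (simp add: a_def mono_def order_less_le)
    then obtain m0 where m0: "i - 1 < m0" "m0 \<le> i - 1 + int q" "t (m0 - 1) \<le> a" "a < t m0"
      using knot_interval_between[OF assms(1), of "i - 1" a q] by (auto simp: a_def)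
    then have m0a: "t (m0 - 1) = t (i - 1)" using assms(1) by (simp add: a_def mono_def order_antisym)
    have "L \<le> t m0 - a"
      using first_knot_gap_lower_bound[OF assms(1-4) ratio, of i m0 q] m0 m0a by (simp add: L_def a_def)
    then have "\<epsilon> * L \<le> \<epsilon> * (t m0 - t (i - 1))" using assms(8) by (simp add: a_def)
    moreover obtain lo hi where "t (i - 1) \<le> lo" "hi \<le> t (i + int q)" "\<epsilon> * (t m0 - t (i - 1)) \<le> hi - lo"
      "\<forall>x\<in>{lo<..<hi}. 0 < bspline t i q x \<and> bspline t i q x \<le> real q * \<epsilon>"
      using bspline_dip_at_left_end[OF assms(1) _ m0(2) m0a _ assms(8,9)] m0 by (auto simp: a_def)
    ultimately show ?thesis unfolding \<epsilon>L by (meson order_trans)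
  qed
qed

section \<open>The Sobolev-Slobodeckij seminorm\<close>

lemma slobodeckij_sq_ge_rectangle:
  assumes "A \<subseteq> S" "A' \<subseteq> S" "A \<in> sets lborel" "A' \<in> sets lborel"
    and bound: "\<And>r s. r \<in> A \<Longrightarrow> s \<in> A' \<Longrightarrow> c \<le> \<bar>v r - v s\<bar>\<^sup>2 * \<bar>r - s\<bar> powr (-1 - 2 * \<sigma>)"
  shows "ennreal c * emeasure lborel A' * emeasure lborel A \<le> slobodeckij_sq \<sigma> S v"
proof -
  have inner: "ennreal c * emeasure lborel A' \<le>
      (\<integral>\<^sup>+ s\<in>S. ennreal (\<bar>v r - v s\<bar>\<^sup>2 * \<bar>r - s\<bar> powr (-1 - 2 * \<sigma>)) \<partial>lborel)" if "r \<in> A" for r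
  proof -
    have "ennreal c * emeasure lborel A' = (\<integral>\<^sup>+ s\<in>A'. ennreal c \<partial>lborel)"
      using assms(4) by (simp add: nn_integral_cmult_indicator)
    also have "\<dots> \<le> (\<integral>\<^sup>+ s\<in>S. ennreal (\<bar>v r - v s\<bar>\<^sup>2 * \<bar>r - s\<bar> powr (-1 - 2 * \<sigma>)) \<partial>lborel)"
      using assms(2) bound[OF that]
      by (intro nn_integral_mono) (auto split: split_indicator intro: ennreal_leI)
    finally show ?thesis .
  qed
  have "ennreal c * emeasure lborel A' * emeasure lborel A = (\<integral>\<^sup>+ r\<in>A. ennreal c * emeasure lborel A' \<partial>lborel)"
    using assms(3) by (simp add: nn_integral_cmult_indicator)
  also have "\<dots> \<le> slobodeckij_sq \<sigma> S v"
    unfolding slobodeckij_sq_def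
    using assms(1) inner by (intro nn_integral_mono) (auto split: split_indicator)
  finally show ?thesis .
qed

lemma powr_le_of_comparable:
  fixes c h m e :: real
  assumes "0 < c" "c \<le> 1" "0 < h" "c * h \<le> m" "m \<le> h" "-1 \<le> e"
  shows "m powr e \<le> h powr e / c"
proof -
  have "0 < m" using mult_pos_pos[OF assms(1,3)] assms(4) by linarith
  show ?thesis
  proof (cases "0 \<le> e")
  case True
    have "m powr e \<le> h powr e" using assms True \<open>0 < m\<close> by (intro powr_mono2) auto
    also have "\<dots> \<le> h powr e / c" using assms by (simp add: divide_simps)
    finally show ?thesis .
  next
    case False
    have "m powr e \<le> (c * h) powr e" using assms False by (intro powr_mono2') auto
    also have "\<dots> = c powr e * h powr e" using assms by (simp add: powr_mult)
    also have "c powr e \<le> c powr (-1)" using assms by (intro powr_mono') auto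
    then have "c powr e * h powr e \<le> h powr e / c"
      using mult_right_mono[of "c powr e" "c powr (-1)" "h powr e"] assms by (simp add: powr_minus_divide)
    finally show ?thesis .
  qed
qed

lemma slobodeckij_sq_ge_separated:
  fixes v :: "real \<Rightarrow> real"
  assumes "{lo..hi} \<subseteq> S" "{lo'<..<hi'} \<subseteq> S" "S \<subseteq> {a..b}" "lo \<le> hi" "lo' \<le> hi'"
    and "-1/2 \<le> \<sigma>" "0 < \<delta>" "\<forall>x\<in>{lo..hi}. \<delta> \<le> v x" "\<forall>x\<in>{lo'<..<hi'}. v x \<le> \<delta> / 2"
  shows "ennreal ((\<delta> / 2)\<^sup>2 * (b - a) powr (-1 - 2 * \<sigma>) * (hi' - lo') * (hi - lo))
    \<le> slobodeckij_sq \<sigma> S v"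
proof -
  define \<kappa> where "\<kappa> = (\<delta> / 2)\<^sup>2 * (b - a) powr (-1 - 2 * \<sigma>)"
  have pointwise: "\<kappa> \<le> \<bar>v r - v s\<bar>\<^sup>2 * \<bar>r - s\<bar> powr (-1 - 2 * \<sigma>)"
    if r: "r \<in> {lo..hi}" and s: "s \<in> {lo'<..<hi'}" for r s
  proof -
    have "\<delta> \<le> v r" "v s \<le> \<delta> / 2" using assms(8,9) r s by auto
    then have "\<delta> / 2 \<le> \<bar>v r - v s\<bar>" by linarith
    then have "(\<delta> / 2)\<^sup>2 \<le> \<bar>v r - v s\<bar>\<^sup>2" using assms(7) by (intro power_mono) auto
    moreover have "r \<noteq> s" using \<open>\<delta> / 2 \<le> \<bar>v r - v s\<bar>\<close> assms(7) by auto
    moreover have "r \<in> {a..b}" "s \<in> {a..b}" using r s assms(1-3) by blast+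
    then have "\<bar>r - s\<bar> \<le> b - a" by (auto simp: abs_if)
    ultimately show ?thesis
      unfolding \<kappa>_def using assms(6) by (intro mult_mono powr_mono2') auto
  qed
  have "ennreal (\<kappa> * (hi' - lo') * (hi - lo))
      = ennreal \<kappa> * emeasure lborel {lo'<..<hi'} * emeasure lborel {lo..hi}"
    using assms(4,5) by (simp add: \<kappa>_def ennreal_mult)
  also have "\<dots> \<le> slobodeckij_sq \<sigma> S v"
    by (rule slobodeckij_sq_ge_rectangle[OF assms(1,2) _ _ pointwise]) auto
  finally show ?thesis by (simp add: \<kappa>_def)
qed

lemma slobodeckij_sq_scaling:
  fixes v :: "real \<Rightarrow> real"
  assumes "closed S" "S \<subseteq> {a..b}" "a < b" "0 < \<sigma>" "\<sigma> < 1" "0 < \<delta>"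
    and plateau: "{lo..hi} \<subseteq> S" "c * (b - a) \<le> hi - lo" "0 < c" "c \<le> 1" "\<forall>x\<in>{lo..hi}. \<delta> \<le> v x"
    and dip: "{lo'<..<hi'} \<subseteq> S" "c' * (b - a) \<le> hi' - lo'" "0 < c'" "\<forall>x\<in>{lo'<..<hi'}. v x \<le> \<delta> / 2"
  shows "ennreal (measure lebesgue S powr (1 - 2 * \<sigma>))
    \<le> ennreal (1 / (c\<^sup>2 * c' * (\<delta> / 2)\<^sup>2)) * slobodeckij_sq \<sigma> S v"
proof -
  define h where "h = b - a"
  define e where "e = 1 - 2 * \<sigma>"
  define \<kappa> where "\<kappa> = (\<delta> / 2)\<^sup>2 * h powr (-1 - 2 * \<sigma>)"
  have "0 < h" using assms(3) by (simp add: h_def)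
  have "0 < c * h" "0 < c' * h" using \<open>0 < h\<close> plateau(3) dip(3) by auto
  have len: "c * h \<le> hi - lo" "c' * h \<le> hi' - lo'" using plateau(2) dip(2) by (simp_all add: h_def)
  have "h powr (-1 - 2 * \<sigma>) * h * h = h powr e"
    using \<open>0 < h\<close> by (simp add: e_def powr_add[symmetric] powr_diff)
  then have "c * c' * (\<delta> / 2)\<^sup>2 * h powr e = \<kappa> * (c' * h) * (c * h)" by (simp add: \<kappa>_def mult_ac)
  also have "\<dots> \<le> \<kappa> * (hi' - lo') * (hi - lo)"
    using len \<open>0 < c * h\<close> \<open>0 < c' * h\<close> by (intro mult_mono mult_left_mono) (auto simp: \<kappa>_def)
  finally have "ennreal (c * c' * (\<delta> / 2)\<^sup>2 * h powr e) \<le> ennreal (\<kappa> * (hi' - lo') * (hi - lo))"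
    by (rule ennreal_leI)
  also have "\<dots> \<le> slobodeckij_sq \<sigma> S v"
    unfolding \<kappa>_def h_def using len \<open>0 < c * h\<close> \<open>0 < c' * h\<close> assms(4)
    by (intro slobodeckij_sq_ge_separated[OF plateau(1) dip(1) assms(2) _ _ _ assms(6) plateau(5) dip(4)])
      auto
  finally have lower: "ennreal (c * c' * (\<delta> / 2)\<^sup>2 * h powr e) \<le> slobodeckij_sq \<sigma> S v" .
  have "S \<in> lmeasurable"
    using assms(1) bounded_subset[OF bounded_closed_interval assms(2)]
    by (intro lmeasurable_compact) (simp add: compact_eq_bounded_closed)
  then have "measure lebesgue {lo..hi} \<le> measure lebesgue S" "measure lebesgue S \<le> measure lebesgue {a..b}"
    by (intro measure_mono_fmeasurable[OF plateau(1)] measure_mono_fmeasurable[OF assms(2)]; simp)+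
  then have "c * h \<le> measure lebesgue S" "measure lebesgue S \<le> h"
    using plateau(2) \<open>0 < c * h\<close> assms(3) by (auto simp: h_def)
  then have "measure lebesgue S powr e \<le> h powr e / c"
    using plateau(3,4) \<open>0 < h\<close> assms(5) by (intro powr_le_of_comparable) (auto simp: e_def)
  also have "\<dots> = 1 / (c\<^sup>2 * c' * (\<delta> / 2)\<^sup>2) * (c * c' * (\<delta> / 2)\<^sup>2 * h powr e)"
    using plateau(3) dip(3) assms(6) by (simp add: power2_eq_square)
  finally have "ennreal (measure lebesgue S powr e)
      \<le> ennreal (1 / (c\<^sup>2 * c' * (\<delta> / 2)\<^sup>2)) * ennreal (c * c' * (\<delta> / 2)\<^sup>2 * h powr e)"
    using plateau(3) dip(3) by (simp add: ennreal_mult[symmetric] ennreal_leI)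
  also have "\<dots> \<le> ennreal (1 / (c\<^sup>2 * c' * (\<delta> / 2)\<^sup>2)) * slobodeckij_sq \<sigma> S v"
    using lower by (rule mult_left_mono) simp
  finally show ?thesis by (simp add: e_def)
qed

section \<open>NURBS\<close>

lemma nurbs_denominator_bounds:
  fixes t :: "int \<Rightarrow> real"
  assumes "mono t" "filterlim t at_top at_top" "filterlim t at_bot at_bot"
    and w: "\<forall>k. wmin \<le> w k \<and> w k \<le> wmax"
  shows "wmin \<le> infsum (\<lambda>k. w k * bspline t k q x) UNIV"
    and "infsum (\<lambda>k. w k * bspline t k q x) UNIV \<le> wmax"
proof -
  obtain j where j: "t (j - 1) \<le> x" "x < t j" using exists_knot_interval[OF assms(1-3)] by blast
  define F where "F = {j - int q..j}"
  have "infsum (\<lambda>k. w k * bspline t k q x) UNIV = (\<Sum>k\<in>F. w k * bspline t k q x)"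
    using bspline_nonzero_imp_index[OF assms(1) _ j]
    by (subst infsum_cong_neutral[of F]) (auto simp: F_def)
  moreover have "(\<Sum>k\<in>F. bspline t k q x) = 1" using bspline_sum_eq_1[OF assms(1) j] by (simp add: F_def)
  moreover have "(\<Sum>k\<in>F. wmin * bspline t k q x) \<le> (\<Sum>k\<in>F. w k * bspline t k q x)"
    and "(\<Sum>k\<in>F. w k * bspline t k q x) \<le> (\<Sum>k\<in>F. wmax * bspline t k q x)"
    by (intro sum_mono mult_right_mono; simp add: w bspline_nonneg[OF assms(1)])+
  ultimately show "wmin \<le> infsum (\<lambda>k. w k * bspline t k q x) UNIV"
    and "infsum (\<lambda>k. w k * bspline t k q x) UNIV \<le> wmax"
    by (simp_all add: sum_distrib_left[symmetric])
qed

lemma nurbs_bspline_bounds: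
  fixes t :: "int \<Rightarrow> real"
  assumes "mono t" "filterlim t at_top at_top" "filterlim t at_bot at_bot"
    and w: "\<forall>k. wmin \<le> w k \<and> w k \<le> wmax" and "0 < wmin"
  shows "wmin / wmax * bspline t i q x \<le> nurbs t w i q x"
    and "nurbs t w i q x \<le> wmax / wmin * bspline t i q x"
    and "nurbs t w i q x \<noteq> 0 \<longleftrightarrow> bspline t i q x \<noteq> 0"
proof -
  define D where "D = infsum (\<lambda>k. w k * bspline t k q x) UNIV"
  have D: "wmin \<le> D" "D \<le> wmax" unfolding D_def using nurbs_denominator_bounds[OF assms(1-4)] by auto
  have R: "nurbs t w i q x = w i * bspline t i q x / D" by (simp add: nurbs_def D_def)
  have B: "0 \<le> bspline t i q x" using bspline_nonneg[OF assms(1)] .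
  have wi: "wmin \<le> w i" "w i \<le> wmax" using w by auto
  show "wmin / wmax * bspline t i q x \<le> nurbs t w i q x"
    using D wi B \<open>0 < wmin\<close> unfolding R times_divide_eq_left
    by (intro frac_le mult_right_mono) auto
  show "nurbs t w i q x \<le> wmax / wmin * bspline t i q x"
    using D wi B \<open>0 < wmin\<close> unfolding R times_divide_eq_left
    by (intro frac_le mult_right_mono) auto
  show "nurbs t w i q x \<noteq> 0 \<longleftrightarrow> bspline t i q x \<noteq> 0"
    using D wi \<open>0 < wmin\<close> unfolding R by simp
qed

lemma weight_bounds_ordered:
  fixes w :: "int \<Rightarrow> real"
  assumes "\<forall>k. wmin \<le> w k \<and> w k \<le> wmax" "0 < wmin"
  shows "wmin \<le> wmax" "0 < wmax"
  using assms(1)[rule_format, of 0] assms(2) by auto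

lemma nurbs_nonzero_imp_knot_bounds:
  fixes t :: "int \<Rightarrow> real"
  assumes "mono t" "filterlim t at_top at_top" "filterlim t at_bot at_bot"
    and "\<forall>k. wmin \<le> w k \<and> w k \<le> wmax" "0 < wmin" "nurbs t w i q x \<noteq> 0"
  shows "t (i - 1) \<le> x \<and> x < t (i + int q)"
  by (rule bspline_nonzero_imp_knot_bounds[OF assms(1)])
    (use assms(6) nurbs_bspline_bounds(3)[OF assms(1-5)] in simp)

definition nurbs_plateau_height :: "nat \<Rightarrow> real \<Rightarrow> real \<Rightarrow> real" where
  "nurbs_plateau_height q wmin wmax = wmin / wmax * (1 / (3 * (real q + 1))) ^ q"

(* The dip threshold eps = delta wmin / (2 q wmax), delta the plateau height, is chosen so that
   (wmax / wmin) q eps = delta / 2. *)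
definition nurbs_dip_fraction :: "nat \<Rightarrow> real \<Rightarrow> real \<Rightarrow> real \<Rightarrow> real" where
  "nurbs_dip_fraction q wmin wmax K =
     nurbs_plateau_height q wmin wmax * wmin / (2 * real q * wmax) / ((real q + 1) * max 1 K ^ q)"

definition nurbs_scaling_const :: "nat \<Rightarrow> real \<Rightarrow> real \<Rightarrow> real \<Rightarrow> real" where
  "nurbs_scaling_const q wmin wmax K =
     1 / ((1 / (3 * (real q + 1)))\<^sup>2 * nurbs_dip_fraction q wmin wmax K *
          (nurbs_plateau_height q wmin wmax / 2)\<^sup>2)"

lemma nurbs_constants_pos:
  assumes "0 < q" "0 < wmin" "0 < wmax"
  shows "0 < nurbs_plateau_height q wmin wmax" "0 < nurbs_dip_fraction q wmin wmax K"
    and "0 < nurbs_scaling_const q wmin wmax K"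
proof -
  show "0 < nurbs_plateau_height q wmin wmax" using assms by (simp add: nurbs_plateau_height_def)
  moreover have "0 < max 1 K ^ q" by simp
  ultimately show "0 < nurbs_dip_fraction q wmin wmax K"
    using assms by (simp add: nurbs_dip_fraction_def)
  with \<open>0 < nurbs_plateau_height q wmin wmax\<close> show "0 < nurbs_scaling_const q wmin wmax K"
    by (simp add: nurbs_scaling_const_def)
qed

lemma nurbs_plateau_height_le_1:
  assumes "0 < wmin" "wmin \<le> wmax"
  shows "nurbs_plateau_height q wmin wmax \<le> 1"
proof -
  have "wmin / wmax \<le> 1" "(1 / (3 * (real q + 1))) ^ q \<le> 1" using assms by (simp_all add: power_le_one)
  then show ?thesis unfolding nurbs_plateau_height_def by (intro mult_le_one) auto
qed

lemma nurbs_plateau: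
  fixes t w :: "int \<Rightarrow> real"
  assumes "mono t" "filterlim t at_top at_top" "filterlim t at_bot at_bot"
    and w: "\<forall>k. wmin \<le> w k \<and> w k \<le> wmax" and "0 < wmin" "t (i - 1) < t (i + int q)"
  shows "\<exists>lo hi. t (i - 1) \<le> lo \<and> hi \<le> t (i + int q) \<and>
    (t (i + int q) - t (i - 1)) / (3 * (real q + 1)) \<le> hi - lo \<and>
    (\<forall>x\<in>{lo..hi}. nurbs_plateau_height q wmin wmax \<le> nurbs t w i q x)"
proof -
  obtain lo hi where lo_hi: "t (i - 1) \<le> lo" "hi \<le> t (i + int q)"
    "(t (i + int q) - t (i - 1)) / (3 * (real q + 1)) \<le> hi - lo"
    and large: "\<forall>x\<in>{lo..hi}. (1 / (3 * (real q + 1))) ^ q \<le> bspline t i q x"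
    using bspline_plateau[OF assms(1,6)] by blast
  have "0 \<le> wmin / wmax" using weight_bounds_ordered[OF w \<open>0 < wmin\<close>] \<open>0 < wmin\<close> by simp
  have "nurbs_plateau_height q wmin wmax \<le> nurbs t w i q x" if "x \<in> {lo..hi}" for x
  proof -
    have "nurbs_plateau_height q wmin wmax \<le> wmin / wmax * bspline t i q x"
      unfolding nurbs_plateau_height_def using large that \<open>0 \<le> wmin / wmax\<close>
      by (intro mult_left_mono) auto
    also have "\<dots> \<le> nurbs t w i q x" by (rule nurbs_bspline_bounds(1)[OF assms(1-5)])
    finally show ?thesis .
  qed
  with lo_hi show ?thesis by blast
qed

lemma nurbs_dip:
  fixes t z w :: "int \<Rightarrow> real"
  assumes "mono t" "filterlim t at_top at_top" "filterlim t at_bot at_bot"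
    and "strict_mono z" "range z = range t" "0 \<le> K"
    and ratio: "\<forall>j. (z j - z (j - 1)) / (z (j - 1) - z (j - 2)) \<le> K"
    and w: "\<forall>k. wmin \<le> w k \<and> w k \<le> wmax" and "0 < wmin" "0 < q" "t (i - 1) < t (i + int q)"
  shows "\<exists>lo hi. t (i - 1) \<le> lo \<and> hi \<le> t (i + int q) \<and>
    nurbs_dip_fraction q wmin wmax K * (t (i + int q) - t (i - 1)) \<le> hi - lo \<and>
    (\<forall>x\<in>{lo<..<hi}. nurbs t w i q x \<noteq> 0) \<and>
    (\<forall>x\<in>{lo<..<hi}. nurbs t w i q x \<le> nurbs_plateau_height q wmin wmax / 2)"
proof -
  define \<delta> where "\<delta> = nurbs_plateau_height q wmin wmax"
  define \<epsilon> where "\<epsilon> = \<delta> * wmin / (2 * real q * wmax)"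
  note wmax = weight_bounds_ordered[OF w \<open>0 < wmin\<close>]
  have "0 < \<epsilon>" using nurbs_constants_pos(1)[OF assms(10,9) wmax(2)] assms(9,10) wmax(2)
    by (simp add: \<epsilon>_def \<delta>_def)
  have "\<delta> * wmin \<le> 1 * wmax"
    using nurbs_plateau_height_le_1[OF assms(9) wmax(1)] wmax(1) \<open>0 < wmin\<close>
    by (intro mult_mono) (auto simp: \<delta>_def)
  also have "\<dots> \<le> 2 * real q * wmax" using assms(10) wmax(2) by simp
  finally have "\<epsilon> \<le> 1" using assms(10) wmax(2) by (simp add: \<epsilon>_def)
  obtain lo hi where lo_hi: "t (i - 1) \<le> lo" "hi \<le> t (i + int q)"
    "\<epsilon> * (t (i + int q) - t (i - 1)) / ((real q + 1) * max 1 K ^ q) \<le> hi - lo"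
    and small: "\<forall>x\<in>{lo<..<hi}. 0 < bspline t i q x \<and> bspline t i q x \<le> real q * \<epsilon>"
    using bspline_dip[OF assms(1,4-6) ratio assms(10,11) \<open>0 < \<epsilon>\<close> \<open>\<epsilon> \<le> 1\<close>] by blast
  have "nurbs_dip_fraction q wmin wmax K * (t (i + int q) - t (i - 1)) \<le> hi - lo"
    using lo_hi(3) by (simp add: nurbs_dip_fraction_def \<epsilon>_def \<delta>_def)
  moreover have "nurbs t w i q x \<noteq> 0" if "x \<in> {lo<..<hi}" for x
    using small that nurbs_bspline_bounds(3)[OF assms(1-3) w \<open>0 < wmin\<close>] by force
  moreover have "nurbs t w i q x \<le> \<delta> / 2" if "x \<in> {lo<..<hi}" for x
  proof -
    have "nurbs t w i q x \<le> wmax / wmin * bspline t i q x"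
      by (rule nurbs_bspline_bounds(2)[OF assms(1-3) w \<open>0 < wmin\<close>])
    also have "\<dots> \<le> wmax / wmin * (real q * \<epsilon>)"
      using small that \<open>0 < wmin\<close> wmax(2) by (intro mult_left_mono) auto
    also have "\<dots> = \<delta> / 2" using assms(9,10) wmax(2) by (simp add: \<epsilon>_def field_simps)
    finally show ?thesis .
  qed
  ultimately show ?thesis using lo_hi(1,2) unfolding \<delta>_def by blast
qed

lemma nurbs_support_scaling:
  fixes t z w :: "int \<Rightarrow> real"
  assumes "0 < q" "0 < wmin" "0 \<le> K" "0 < \<sigma>" "\<sigma> < 1"
    and "mono t" "filterlim t at_top at_top" "filterlim t at_bot at_bot"
    and "strict_mono z" "range z = range t"
    and ratio: "\<forall>j. (z j - z (j - 1)) / (z (j - 1) - z (j - 2)) \<le> K"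
    and w: "\<forall>k. wmin \<le> w k \<and> w k \<le> wmax"
    and "0 < measure lebesgue (supp (nurbs t w i q))"
  shows "ennreal (measure lebesgue (supp (nurbs t w i q)) powr (1 - 2 * \<sigma>))
    \<le> ennreal (nurbs_scaling_const q wmin wmax K) *
      slobodeckij_sq \<sigma> (supp (nurbs t w i q)) (nurbs t w i q)"
proof -
  define R where "R = nurbs t w i q"
  define S where "S = supp R"
  define a where "a = t (i - 1)"
  define b where "b = t (i + int q)"
  have nonzero: "{x. R x \<noteq> 0} \<subseteq> {a..<b}"
    using nurbs_nonzero_imp_knot_bounds[OF assms(6-8) w assms(2)] by (auto simp: R_def a_def b_def)
  then have "S \<subseteq> {a..b}" unfolding S_def supp_def by (intro closure_minimal) auto
  have in_S: "{x. R x \<noteq> 0} \<subseteq> S" unfolding S_def supp_def by (rule closure_subset)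
  have "a < b"
  proof (rule ccontr)
    assume "\<not> a < b"
    then have "S = {}" using nonzero by (simp add: S_def supp_def)
    then show False using assms(13) by (simp add: S_def R_def)
  qed
  then have ab: "t (i - 1) < t (i + int q)" by (simp add: a_def b_def)
  note pos = nurbs_constants_pos(1)[OF assms(1,2) weight_bounds_ordered(2)[OF w assms(2)]]
    nurbs_constants_pos(2,3)[OF assms(1,2) weight_bounds_ordered(2)[OF w assms(2)], of K]
  obtain lo hi where plateau: "a \<le> lo" "hi \<le> b" "(b - a) / (3 * (real q + 1)) \<le> hi - lo"
    "\<forall>x\<in>{lo..hi}. nurbs_plateau_height q wmin wmax \<le> R x"
    using nurbs_plateau[OF assms(6-8) w assms(2) ab] by (auto simp: R_def a_def b_def)
  obtain lo' hi' where dip: "a \<le> lo'" "hi' \<le> b" "nurbs_dip_fraction q wmin wmax K * (b - a) \<le> hi' - lo'"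
    "\<forall>x\<in>{lo'<..<hi'}. R x \<noteq> 0" "\<forall>x\<in>{lo'<..<hi'}. R x \<le> nurbs_plateau_height q wmin wmax / 2"
    using nurbs_dip[OF assms(6-10,3) ratio w assms(2,1) ab] by (auto simp: R_def a_def b_def)
  have "{lo..hi} \<subseteq> S" using plateau(4) pos(1) in_S by fastforce
  moreover have "{lo'<..<hi'} \<subseteq> S" using dip(4) in_S by blast
  moreover have "closed S" by (simp add: S_def supp_def)
  ultimately have "ennreal (measure lebesgue S powr (1 - 2 * \<sigma>))
    \<le> ennreal (1 / ((1 / (3 * (real q + 1)))\<^sup>2 * nurbs_dip_fraction q wmin wmax K *
         (nurbs_plateau_height q wmin wmax / 2)\<^sup>2)) * slobodeckij_sq \<sigma> S R"
    using plateau(3) by (intro slobodeckij_sq_scaling[OF _ \<open>S \<subseteq> {a..b}\<close> \<open>a < b\<close> assms(4,5) pos(1) _ _ _ _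
        plateau(4) _ dip(3) pos(2) dip(5)]) simp_all
  then show ?thesis by (simp only: S_def R_def nurbs_scaling_const_def)
qed

theorem lemma2p3:
  fixes q :: nat and wmin wmax K :: real
  assumes "q > 0" and "wmin > 0" and "wmax > 0" and "K > 0"
  shows "\<exists>C>0. \<forall>(\<sigma>::real) (t::int \<Rightarrow> real) (z::int \<Rightarrow> real) (w::int \<Rightarrow> real).
     0 < \<sigma> \<longrightarrow> \<sigma> < 1 \<longrightarrow>
     mono t \<longrightarrow> filterlim t at_top at_top \<longrightarrow> filterlim t at_bot at_bot \<longrightarrow>
     strict_mono z \<longrightarrow> range z = range t \<longrightarrow>
     (\<forall>i. wmin \<le> w i \<and> w i \<le> wmax) \<longrightarrow>
     (\<forall>j. max ((z j - z (j - 1)) / (z (j - 1) - z (j - 2)))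
                ((z j - z (j - 1)) / (z (j + 1) - z j)) \<le> K) \<longrightarrow>
     (\<forall>i. measure lebesgue (supp (nurbs t w i q)) > 0 \<longrightarrow>
        ennreal (measure lebesgue (supp (nurbs t w i q)) powr (1 - 2 * \<sigma>))
          \<le> ennreal C * slobodeckij_sq \<sigma> (supp (nurbs t w i q)) (nurbs t w i q))"
proof (intro exI[of _ "nurbs_scaling_const q wmin wmax K"] conjI allI impI)
  show "0 < nurbs_scaling_const q wmin wmax K" by (rule nurbs_constants_pos(3)[OF assms(1-3)])
next
  fix \<sigma> :: real and t z w :: "int \<Rightarrow> real" and i :: int
  assume "0 < \<sigma>" "\<sigma> < 1" "mono t" "filterlim t at_top at_top" "filterlim t at_bot at_bot"
    "strict_mono z" "range z = range t" "\<forall>i. wmin \<le> w i \<and> w i \<le> wmax"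
    and mesh: "\<forall>j. max ((z j - z (j - 1)) / (z (j - 1) - z (j - 2)))
                ((z j - z (j - 1)) / (z (j + 1) - z j)) \<le> K"
    and "0 < measure lebesgue (supp (nurbs t w i q))"
  moreover have "\<forall>j. (z j - z (j - 1)) / (z (j - 1) - z (j - 2)) \<le> K" using mesh by simp
  ultimately show "ennreal (measure lebesgue (supp (nurbs t w i q)) powr (1 - 2 * \<sigma>))
      \<le> ennreal (nurbs_scaling_const q wmin wmax K) *
        slobodeckij_sq \<sigma> (supp (nurbs t w i q)) (nurbs t w i q)"
    using nurbs_support_scaling[of q wmin K \<sigma> t z] assms(1,2,4) by simp
qed

end
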